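(* Let $\alpha,\beta\in(0,\pi)$ with $\alpha+\beta\ge\pi$. Then \[ P(S_{\alpha,\beta})=\frac{1}{\sin\frac{\min\{\alpha,\beta,\alpha+\beta-\pi\}}{2}}, \] with the convention $1/\sin 0=+\infty$.
   Context: For $\alpha\in(0,2\pi)$, $S_\alpha=\{re^{it}: r>0,\ t\in(0,\alpha)\}$. For $\alpha,\beta\in(0,\pi)$ with $\alpha+\beta\ge\pi$ the double angular domain is \[ S_{\alpha,\beta}=S_\alpha\cap\{1+re^{it}: r>0,\ t\in(\pi-\beta,\pi)\}, \] whose boundary in $\overline{\mathbb{C}}$ is the Jordan curve formed by the segment $[0,1]$, two rays and the point $\infty$. For four distinct points $a,b,c,d\in\overline{\mathbb{C}}$ set $p(a,b,c,d)=\frac{|a-b||c-d|+|a-d||b-c|}{|a-c||b-d|}$, with the expression understood as a limit (factors containing $\infty$ cancelled) if one point is $\infty$. For a domain $D\subset\overline{\mathbb{C}}$ with Jordan boundary, $P(D)=\sup p(a,b,c,d)$ over all distinct $a,b,c,d\in\partial D$ occurring in this order along the positively oriented boundary. *)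

theory Defs
  imports Complex_Main "HOL-Library.Extended_Real"
begin

definition S_ang :: "real \<Rightarrow> complex set" where
  "S_ang \<alpha> = {of_real r * cis t | r t. r > 0 \<and> 0 < t \<and> t < \<alpha>}"

definition S_double :: "real \<Rightarrow> real \<Rightarrow> complex set" where
  "S_double \<alpha> \<beta> = S_ang \<alpha> \<inter> {1 + of_real r * cis t | r t. r > 0 \<and> pi - \<beta> < t \<and> t < pi}"

text \<open>Points of the extended plane: None is the point at infinity.\<close>

text \<open>The cross-ratio-type quantity p(a,b,c,d); if one point is infinity, the
  factors containing it are cancelled (this is the limit value).\<close>
fun pq :: "complex option \<Rightarrow> complex option \<Rightarrow> complex option \<Rightarrow> complex option \<Rightarrow> real" where
  "pq (Some a) (Some b) (Some c) (Some d) =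
     (cmod (a - b) * cmod (c - d) + cmod (a - d) * cmod (b - c)) / (cmod (a - c) * cmod (b - d))"
| "pq (Some a) (Some b) (Some c) None = (cmod (a - b) + cmod (b - c)) / cmod (a - c)"
| "pq (Some a) (Some b) None (Some d) = (cmod (a - b) + cmod (a - d)) / cmod (b - d)"
| "pq (Some a) None (Some c) (Some d) = (cmod (c - d) + cmod (a - d)) / cmod (a - c)"
| "pq None (Some b) (Some c) (Some d) = (cmod (c - d) + cmod (b - c)) / cmod (b - d)"
| "pq _ _ _ _ = 0"

text \<open>Positively oriented parametrisation of the boundary of S_double alpha beta:
  parameter t in real \<union> {infinity}.\<close>
definition bd_param :: "real \<Rightarrow> real \<Rightarrow> real \<Rightarrow> complex" where
  "bd_param \<alpha> \<beta> t =
     (if t \<le> 0 then of_real (- t) * cis \<alpha>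
      else if t \<le> 1 then of_real t
      else 1 + of_real (t - 1) * cis (pi - \<beta>))"

definition bd_pt :: "real \<Rightarrow> real \<Rightarrow> real option \<Rightarrow> complex option" where
  "bd_pt \<alpha> \<beta> x = map_option (bd_param \<alpha> \<beta>) x"

fun olt :: "real option \<Rightarrow> real option \<Rightarrow> bool" where
  "olt (Some s) (Some t) = (s < t)"
| "olt (Some s) None = True"
| "olt None _ = False"

definition cyc_ord4 :: "real option \<Rightarrow> real option \<Rightarrow> real option \<Rightarrow> real option \<Rightarrow> bool" where
  "cyc_ord4 x1 x2 x3 x4 =
     ((olt x1 x2 \<and> olt x2 x3 \<and> olt x3 x4) \<or> (olt x2 x3 \<and> olt x3 x4 \<and> olt x4 x1) \<or>
      (olt x3 x4 \<and> olt x4 x1 \<and> olt x1 x2) \<or> (olt x4 x1 \<and> olt x1 x2 \<and> olt x2 x3))"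

definition P_double :: "real \<Rightarrow> real \<Rightarrow> ereal" where
  "P_double \<alpha> \<beta> = Sup {ereal (pq (bd_pt \<alpha> \<beta> x1) (bd_pt \<alpha> \<beta> x2) (bd_pt \<alpha> \<beta> x3) (bd_pt \<alpha> \<beta> x4))
                          | x1 x2 x3 x4. cyc_ord4 x1 x2 x3 x4}"

end

theory Submission
  imports Defs "HOL-Analysis.Complex_Transcendental"
begin

text \<open>Put g = \<alpha> + \<beta> - \<pi>, the smallest of the three angles. The boundary turns left by
  \<pi> - \<alpha> at 0 and by \<pi> - \<beta> at 1, so every chord from a boundary point to a later (earlier)
  one points into the cone spanned by the edge directions after (before) it; hence for boundary
  points A, B, C in this order the angle at B lies in [g, \<pi>]. The law of cosines turns such an
  angle bound into (|A - B| + |B - C|) sin (g/2) \<le> |A - C|, which is the claim when the fourth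
  point is \<infinity>. For four finite points the quadrilateral is convex with angles at least g at
  B and C, so the angles at A and C add up to a value in [g, 2\<pi> - g]; the same estimate applied
  to (A - B)(C - D) and (A - D)(B - C), whose difference is -(A - C)(B - D) (Ptolemy's identity),
  gives the bound. Conversely the points 1 + R, \<infinity>, R e^{i\<alpha>}, 0 give values tending to
  1/sin (g/2) as R \<rightarrow> \<infinity>.\<close>

section \<open>Polar forms\<close>

lemma rcis_mult_cis: "rcis r p * cis q = rcis r (p + q)"
  by (simp add: rcis_def cis_mult mult.assoc)

lemma rcis_mult_cnj_rcis: "rcis r p * cnj (rcis s q) = rcis (r * s) (p - q)"
proof -
  have "cis p * cis (- q) = cis (p - q)" by (simp add: cis_mult)
  then show ?thesis by (simp add: rcis_def cis_cnj mult_ac)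
qed

lemma upper_half_plane_polar:
  assumes "0 \<le> Im w"
  obtains p where "0 \<le> p" "p \<le> pi" "w = rcis (cmod w) p"
  using assms Arg_less_0 Arg_bounded rcis_cmod_Arg by metis

lemma Re_le_cos_mult_norm:
  assumes "cos p \<le> cos g" "z = rcis (cmod z) p"
  shows "Re z \<le> cos g * cmod z"
proof -
  have "Re z = cmod z * cos p"
    by (subst assms(2)) simp
  with assms(1) show ?thesis
    by (simp add: mult.commute mult_left_mono)
qed

lemma norm_cis_diff: "cmod (cis a - cis b) = 2 * \<bar>sin ((a - b) / 2)\<bar>"
proof -
  have "cos (a - b) = 1 - 2 * (sin ((a - b) / 2))\<^sup>2"
    using cos_double_sin[of "(a - b) / 2"] by (simp only: mult_2 field_sum_of_halves)
  then have "(cmod (cis a - cis b))\<^sup>2 = (2 * sin ((a - b) / 2))\<^sup>2"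
    by (simp only: cmod_power2) (simp add: power2_eq_square algebra_simps cos_diff)
  then show ?thesis
    by (metis abs_mult abs_numeral norm_ge_zero power2_abs power2_eq_imp_eq abs_ge_zero)
qed

section \<open>Closed cones of directions\<close>

text \<open>For b \<le> a + \<pi>, the closed cone of the vectors whose direction lies in [a, b]; the
  inequalities make closure under addition immediate.\<close>
definition sector :: "real \<Rightarrow> real \<Rightarrow> complex set" where
  "sector a b = {v. 0 \<le> Im (v * cis (-a)) \<and> Im (v * cis (-b)) \<le> 0 \<and> 0 \<le> Re (v * cis (-((a + b) / 2)))}"

lemma sector_add: "u \<in> sector a b \<Longrightarrow> v \<in> sector a b \<Longrightarrow> u + v \<in> sector a b"
  unfolding sector_def by (simp add: distrib_right)

lemma rcis_in_sector:
  assumes "0 \<le> r" "r = 0 \<or> a \<le> p \<and> p \<le> b" "b \<le> a + pi"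
  shows "rcis r p \<in> sector a b"
proof (cases "r = 0")
  case False
  with assms have p: "a \<le> p" "p \<le> b" by auto
  have "0 \<le> sin (p - a)" "sin (p - b) \<le> 0" "0 \<le> cos (p - (a + b) / 2)"
    using p assms(3) sin_ge_zero[of "b - p"]
    by (auto intro!: sin_ge_zero cos_ge_zero simp: field_simps sin_minus[of "b - p", simplified])
  moreover have "Im (rcis r p * cis (- q)) = r * sin (p - q)" "Re (rcis r p * cis (- q)) = r * cos (p - q)" for q
    by (simp_all only: rcis_mult_cis Im_rcis Re_rcis diff_conv_add_uminus)
  ultimately show ?thesis
    using assms(1) unfolding sector_def mem_Collect_eq
    by (simp only:) (intro conjI mult_nonneg_nonneg mult_nonneg_nonpos)
qed (simp add: sector_def)

lemma sector_polar:
  assumes "v \<in> sector a b" "a \<le> b" "b \<le> a + pi"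
  obtains p where "a \<le> p" "p \<le> b" "v = rcis (cmod v) p"
proof (cases "v = 0")
  case True
  with assms(2) that show ?thesis by auto
next
  case False
  have "0 \<le> Im (v * cis (- a))"
    using assms(1) by (simp add: sector_def)
  then obtain q where q: "0 \<le> q" "q \<le> pi" "v * cis (- a) = rcis (cmod v) q"
    by (rule upper_half_plane_polar) (simp add: norm_mult)
  have v: "v = rcis (cmod v) (q + a)"
    using arg_cong[OF q(3), of "\<lambda>z. z * cis a"] by (simp add: rcis_mult_cis mult.assoc cis_mult)
  have "Im (v * cis (- b)) = cmod v * sin (q + a - b)"
    "Re (v * cis (- ((a + b) / 2))) = cmod v * cos (q + a - (a + b) / 2)"
    by (subst v; simp only: rcis_mult_cis Im_rcis Re_rcis diff_conv_add_uminus)+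
  with assms(1) have "cmod v * sin (q + a - b) \<le> 0" "0 \<le> cmod v * cos (q + a - (a + b) / 2)"
    unfolding sector_def by auto
  with False have sin: "sin (q + a - b) \<le> 0" and cos: "0 \<le> cos (q + a - (a + b) / 2)"
    by (simp_all add: mult_le_0_iff zero_le_mult_iff)
  have "q \<le> b - a"
  proof (rule ccontr)
    assume "\<not> q \<le> b - a"
    show False
    proof (cases "q + a - b < pi")
      case True
      with \<open>\<not> q \<le> b - a\<close> have "0 < sin (q + a - b)" by (intro sin_gt_zero) auto
      with sin show False by simp
    next
      case False
      with q assms(2) have "q = pi" "a = b" by auto
      with cos show False by simp
    qed
  qed
  with q v show ?thesis by (intro that[of "q + a"]) auto
qed

lemma sector_cos_bound:
  assumes "W \<in> sector g pi" "0 \<le> g" "g \<le> pi"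
  shows "Re W \<le> cos g * cmod W"
proof -
  obtain p where p: "g \<le> p" "p \<le> pi" "W = rcis (cmod W) p"
    using sector_polar[OF assms(1) assms(3)] assms(2) by auto
  have "cos p \<le> cos g"
    using p assms by (subst cos_mono_le_eq) auto
  then show ?thesis
    using p(3) by (rule Re_le_cos_mult_norm)
qed

lemma sector_Im_nonneg: "W \<in> sector g pi \<Longrightarrow> 0 \<le> Im W"
  by (simp add: sector_def)

section \<open>Angles of triangles and quadrilaterals\<close>

text \<open>The argument of vertex_prod P Q R is the angle at Q turning from R - Q to P - Q.\<close>
definition vertex_prod :: "complex \<Rightarrow> complex \<Rightarrow> complex \<Rightarrow> complex" where
  "vertex_prod P Q R = (P - Q) * cnj (R - Q)"

lemma Im_vertex_prod_rotate: "Im (vertex_prod P Q R) = Im (vertex_prod Q R P)"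
  by (simp add: vertex_prod_def algebra_simps)

lemma norm_diff_ge_by_angle:
  fixes z w :: complex
  assumes "Re (z * cnj w) \<le> cos g * (cmod z * cmod w)"
  shows "(cmod z + cmod w) * sin (g / 2) \<le> cmod (z - w)"
proof -
  have "((cmod z + cmod w) * sin (g / 2))\<^sup>2 = (cmod z + cmod w)\<^sup>2 * (1 - cos g) / 2"
    using cos_double_sin[of "g / 2"] unfolding power_mult_distrib by simp
  also have "\<dots> \<le> (cmod z)\<^sup>2 + (cmod w)\<^sup>2 - 2 * cos g * (cmod z * cmod w)"
    using mult_right_mono[OF _ zero_le_power2[of "cmod z - cmod w"], of "- 1" "cos g"]
    by (simp add: power2_eq_square algebra_simps divide_simps)
  also have "\<dots> \<le> (cmod z)\<^sup>2 + (cmod w)\<^sup>2 - 2 * Re (z * cnj w)"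
    using assms by simp
  also have "\<dots> = (cmod (z - w))\<^sup>2"
    by (simp only: cmod_power2) (simp add: power2_eq_square algebra_simps)
  finally show ?thesis
    by (rule power2_le_imp_le) simp
qed

lemma three_point_sin_bound:
  assumes "vertex_prod A B C \<in> sector g pi" "0 \<le> g" "g \<le> pi"
  shows "(cmod (A - B) + cmod (B - C)) * sin (g / 2) \<le> cmod (A - C)"
proof -
  have "Re ((A - B) * cnj (C - B)) \<le> cos g * (cmod (A - B) * cmod (C - B))"
    using sector_cos_bound[OF assms] by (simp only: vertex_prod_def norm_mult complex_mod_cnj)
  from norm_diff_ge_by_angle[OF this] show ?thesis
    by (simp add: norm_minus_commute)
qed

lemma vertex_prod_cycle_product:
  "vertex_prod D A B * vertex_prod A B C * vertex_prod B C D * vertex_prod C D A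
     = of_real ((cmod (A - B) * cmod (B - C) * cmod (C - D) * cmod (D - A))\<^sup>2)"
proof -
  have "vertex_prod Z X Y = - ((Z - X) * cnj (X - Y))" for X Y Z
    by (simp add: vertex_prod_def algebra_simps)
  then show ?thesis
    by (simp only: power_mult_distrib of_real_mult complex_norm_square mult_minus_left
        mult_minus_right minus_minus) (simp only: mult_ac)
qed

lemma eq_of_real_mult_if_mult_cnj:
  assumes "z * cnj w = of_real r" "w \<noteq> 0"
  shows "z = of_real (r / (cmod w)\<^sup>2) * w"
proof -
  have "z * of_real ((cmod w)\<^sup>2) = z * cnj w * w"
    unfolding complex_norm_square by (simp add: mult_ac)
  also have "\<dots> = of_real r * w"
    using assms(1) by simp
  finally show ?thesis
    using assms(2) by (simp add: field_simps)
qed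

lemma Re_vertex_prod_pos_if_straight:
  assumes "vertex_prod A B C = - of_real r" "vertex_prod B C D = - of_real s" "0 < r" "0 < s"
  shows "0 < Re (vertex_prod D A B)"
proof -
  define \<mu> where "\<mu> = r / (cmod (B - A))\<^sup>2"
  define \<nu> where "\<nu> = s / (cmod (C - B))\<^sup>2"
  have nz: "B - A \<noteq> 0" "C - B \<noteq> 0"
    using assms by (auto simp: vertex_prod_def)
  have "(C - B) * cnj (B - A) = of_real r"
    using arg_cong[OF assms(1), of cnj] by (simp add: vertex_prod_def algebra_simps)
  then have C: "C - B = of_real \<mu> * (B - A)"
    unfolding \<mu>_def using nz(1) by (rule eq_of_real_mult_if_mult_cnj)
  have "(D - C) * cnj (C - B) = of_real s"
    using arg_cong[OF assms(2), of cnj] by (simp add: vertex_prod_def algebra_simps)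
  then have D: "D - C = of_real \<nu> * (C - B)"
    unfolding \<nu>_def using nz(2) by (rule eq_of_real_mult_if_mult_cnj)
  have "D - A = (B - A) + (C - B) + (D - C)"
    by simp
  also have "\<dots> = of_real (1 + \<mu> + \<nu> * \<mu>) * (B - A)"
    by (simp only: C D) (simp add: algebra_simps)
  finally have "vertex_prod D A B = of_real ((1 + \<mu> + \<nu> * \<mu>) * (cmod (B - A))\<^sup>2)"
    unfolding vertex_prod_def of_real_mult complex_norm_square by (simp add: mult.assoc)
  moreover have "0 < \<mu>" "0 < \<nu>"
    using assms nz unfolding \<mu>_def \<nu>_def by simp_all
  ultimately show ?thesis
    using nz by (simp add: add_pos_pos)
qed

text \<open>The four vertex products multiply to a positive real, so the angles sum to 2\<pi> or 4\<pi>;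
  in the second case all angles are straight, which forces A, B, C, D onto a line in this order
  and makes the angle at A zero instead.\<close>
lemma quadrilateral_angle_sum:
  assumes "A \<noteq> B" "B \<noteq> C" "C \<noteq> D" "D \<noteq> A" "0 < g" "g \<le> pi"
    and "0 \<le> Im (vertex_prod D A B)" "vertex_prod A B C \<in> sector g pi"
    and "vertex_prod B C D \<in> sector g pi" "0 \<le> Im (vertex_prod C D A)"
  obtains a b c d where
    "vertex_prod D A B = rcis (cmod (vertex_prod D A B)) a" "0 \<le> a" "a \<le> pi"
    "vertex_prod A B C = rcis (cmod (vertex_prod A B C)) b" "g \<le> b" "b \<le> pi"
    "vertex_prod B C D = rcis (cmod (vertex_prod B C D)) c" "g \<le> c" "c \<le> pi"
    "vertex_prod C D A = rcis (cmod (vertex_prod C D A)) d" "0 \<le> d" "d \<le> pi"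
    "a + b + c + d = 2 * pi"
proof -
  obtain a where a: "0 \<le> a" "a \<le> pi" "vertex_prod D A B = rcis (cmod (vertex_prod D A B)) a"
    using assms(7) by (rule upper_half_plane_polar)
  obtain b where b: "g \<le> b" "b \<le> pi" "vertex_prod A B C = rcis (cmod (vertex_prod A B C)) b"
    using assms(5,6,8) by (elim sector_polar) auto
  obtain c where c: "g \<le> c" "c \<le> pi" "vertex_prod B C D = rcis (cmod (vertex_prod B C D)) c"
    using assms(5,6,9) by (elim sector_polar) auto
  obtain d where d: "0 \<le> d" "d \<le> pi" "vertex_prod C D A = rcis (cmod (vertex_prod C D A)) d"
    using assms(10) by (rule upper_half_plane_polar)
  define R where "R = cmod (vertex_prod D A B * vertex_prod A B C * vertex_prod B C D * vertex_prod C D A)"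
  have "0 < R"
    using assms(1-4) by (simp add: R_def vertex_prod_def)
  have "rcis R (a + b + c + d) = rcis (cmod (vertex_prod D A B)) a * rcis (cmod (vertex_prod A B C)) b
      * rcis (cmod (vertex_prod B C D)) c * rcis (cmod (vertex_prod C D A)) d"
    by (simp add: R_def rcis_mult norm_mult)
  also have "\<dots> = vertex_prod D A B * vertex_prod A B C * vertex_prod B C D * vertex_prod C D A"
    using a(3) b(3) c(3) d(3) by metis
  also have "\<dots> = of_real R"
    unfolding R_def vertex_prod_cycle_product norm_of_real abs_power2 ..
  finally have "cos (a + b + c + d) = 1"
    using \<open>0 < R\<close> by (simp add: complex_eq_iff)
  then obtain n :: int where n: "a + b + c + d = of_int n * 2 * pi"
    by (auto simp: cos_one_2pi_int)
  have "0 < of_int n * 2 * pi" "of_int n * 2 * pi \<le> 2 * 2 * pi"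
    using a b c d assms(5) unfolding n[symmetric] by auto
  then have "0 < n" "n \<le> 2"
    by (simp_all add: zero_less_mult_iff mult_le_cancel_right)
  moreover have "n \<noteq> 2"
  proof
    assume "n = 2"
    then have "a = pi" "b = pi" "c = pi"
      using n a b c d by auto
    moreover have "vertex_prod A B C \<noteq> 0" "vertex_prod B C D \<noteq> 0"
      using assms(1-3) by (auto simp: vertex_prod_def)
    ultimately have "0 < Re (vertex_prod D A B)"
      using b(3) c(3) by (intro Re_vertex_prod_pos_if_straight) (auto simp: rcis_def)
    with a(3) \<open>a = pi\<close> show False
      by (metis Re_rcis cos_pi mult_minus1_right norm_ge_zero neg_0_less_iff_less not_le)
  qed
  ultimately have "n = 1"
    by linarith
  then have "a + b + c + d = 2 * pi"
    using n by simp
  with a b c d show ?thesis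
    by (intro that) auto
qed

lemma opposite_vertex_prods_cos_bound:
  assumes "0 < g" "g \<le> pi"
    and "0 \<le> Im (vertex_prod D A B)" "vertex_prod A B C \<in> sector g pi"
    and "vertex_prod B C D \<in> sector g pi" "0 \<le> Im (vertex_prod C D A)"
  shows "Re (vertex_prod D A B * vertex_prod B C D) \<le> cos g * cmod (vertex_prod D A B * vertex_prod B C D)"
proof (cases "vertex_prod D A B = 0 \<or> vertex_prod B C D = 0")
  case False
  then have neq: "A \<noteq> B" "B \<noteq> C" "C \<noteq> D" "D \<noteq> A"
    by (auto simp: vertex_prod_def)
  obtain a b c d where
    a: "vertex_prod D A B = rcis (cmod (vertex_prod D A B)) a" "0 \<le> a" and
    c: "vertex_prod B C D = rcis (cmod (vertex_prod B C D)) c" "g \<le> c" and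
    "g \<le> b" "0 \<le> d" "a + b + c + d = 2 * pi"
    by (rule quadrilateral_angle_sum[OF neq assms]) blast
  then have ac: "g \<le> a + c" "a + c \<le> 2 * pi - g"
    by linarith+
  have "cos (a + c) \<le> cos g"
  proof (cases "a + c \<le> pi")
    case True
    with ac assms(1) show ?thesis by (intro cos_monotone_0_pi_le) auto
  next
    case False
    have "cos (a + c) = cos (2 * pi - (a + c))"
      by simp
    also have "\<dots> \<le> cos g"
      using False ac assms(1) by (intro cos_monotone_0_pi_le) auto
    finally show ?thesis .
  qed
  moreover have "vertex_prod D A B * vertex_prod B C D
      = rcis (cmod (vertex_prod D A B * vertex_prod B C D)) (a + c)"
    by (subst a(1), subst c(1)) (simp add: rcis_mult norm_mult)
  ultimately show ?thesis
    by (rule Re_le_cos_mult_norm)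
qed auto

lemma ptolemy_sin_bound:
  assumes "0 < g" "g \<le> pi"
    and "0 \<le> Im (vertex_prod D A B)" "vertex_prod A B C \<in> sector g pi"
    and "vertex_prod B C D \<in> sector g pi" "0 \<le> Im (vertex_prod C D A)"
  shows "(cmod (A - B) * cmod (C - D) + cmod (A - D) * cmod (B - C)) * sin (g / 2)
    \<le> cmod (A - C) * cmod (B - D)"
proof -
  define z where "z = - ((A - B) * (C - D))"
  define w where "w = (A - D) * (B - C)"
  have prod: "vertex_prod D A B * vertex_prod B C D = cnj (z * cnj w)"
    by (simp add: z_def w_def vertex_prod_def algebra_simps)
  have "Re (z * cnj w) \<le> cos g * (cmod z * cmod w)"
    using opposite_vertex_prods_cos_bound[OF assms] unfolding prod by (simp add: norm_mult)
  moreover have "z - w = - ((A - C) * (B - D))"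
    by (simp add: z_def w_def algebra_simps)
  ultimately show ?thesis
    using norm_diff_ge_by_angle[of z w g] by (simp add: z_def w_def norm_mult)
qed

section \<open>Chords of the boundary\<close>

text \<open>Each summand moves monotonically along one edge, so a chord is a nonnegative combination
  of the edge directions it passes.\<close>
lemma bd_param_eq:
  "bd_param \<alpha> \<beta> t = rcis (max (- t) 0) \<alpha> + of_real (max 0 (min t 1)) + rcis (max (t - 1) 0) (pi - \<beta>)"
  by (simp add: bd_param_def rcis_def)

text \<open>The direction in which the boundary arrives at the parameter t.\<close>
definition bd_dir :: "real \<Rightarrow> real \<Rightarrow> real \<Rightarrow> real" where
  "bd_dir \<alpha> \<beta> t = (if t \<le> 0 then \<alpha> - pi else if t \<le> 1 then 0 else pi - \<beta>)"

lemma bd_chord_forward: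
  assumes "\<alpha> \<le> pi" "\<beta> \<le> pi" "pi \<le> \<alpha> + \<beta>" "t < t'"
  shows "bd_param \<alpha> \<beta> t' - bd_param \<alpha> \<beta> t \<in> sector (bd_dir \<alpha> \<beta> t) (pi - \<beta>)"
proof -
  define c1 where "c1 = max (- t) 0 - max (- t') 0"
  define c2 where "c2 = max 0 (min t' 1) - max 0 (min t 1)"
  define c3 where "c3 = max (t' - 1) 0 - max (t - 1) 0"
  have "bd_param \<alpha> \<beta> t' - bd_param \<alpha> \<beta> t = rcis c1 (\<alpha> - pi) + rcis c2 0 + rcis c3 (pi - \<beta>)"
    by (simp add: bd_param_eq rcis_def c1_def c2_def c3_def cis_def complex_eq_iff algebra_simps)
  also have "\<dots> \<in> sector (bd_dir \<alpha> \<beta> t) (pi - \<beta>)"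
    using assms unfolding c1_def c2_def c3_def bd_dir_def
    by (intro sector_add rcis_in_sector) auto
  finally show ?thesis .
qed

lemma bd_chord_backward:
  assumes "0 \<le> \<alpha>" "\<alpha> \<le> pi" "\<beta> \<le> pi" "pi \<le> \<alpha> + \<beta>" "t' < t"
  shows "bd_param \<alpha> \<beta> t' - bd_param \<alpha> \<beta> t \<in> sector \<alpha> (bd_dir \<alpha> \<beta> t + pi)"
proof -
  define c1 where "c1 = max (- t') 0 - max (- t) 0"
  define c2 where "c2 = max 0 (min t 1) - max 0 (min t' 1)"
  define c3 where "c3 = max (t - 1) 0 - max (t' - 1) 0"
  have "bd_param \<alpha> \<beta> t' - bd_param \<alpha> \<beta> t = rcis c1 \<alpha> + rcis c2 pi + rcis c3 (2 * pi - \<beta>)"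
    by (simp add: bd_param_eq rcis_def c1_def c2_def c3_def cis_def complex_eq_iff algebra_simps
        sin_diff cos_diff)
  also have "\<dots> \<in> sector \<alpha> (bd_dir \<alpha> \<beta> t + pi)"
    using assms unfolding c1_def c2_def c3_def bd_dir_def
    by (intro sector_add rcis_in_sector) auto
  finally show ?thesis .
qed

lemma bd_vertex_prod_in_sector:
  assumes "0 < \<alpha>" "\<alpha> < pi" "0 < \<beta>" "\<beta> < pi" "pi \<le> \<alpha> + \<beta>" "x < y" "y < z"
  shows "vertex_prod (bd_param \<alpha> \<beta> x) (bd_param \<alpha> \<beta> y) (bd_param \<alpha> \<beta> z) \<in> sector (\<alpha> + \<beta> - pi) pi"
proof -
  define d where "d = bd_dir \<alpha> \<beta> y"
  have d: "\<alpha> - pi \<le> d" "d \<le> \<alpha>" "d \<le> pi - \<beta>"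
    using assms unfolding d_def bd_dir_def by auto
  have "bd_param \<alpha> \<beta> x - bd_param \<alpha> \<beta> y \<in> sector \<alpha> (d + pi)"
    using bd_chord_backward assms unfolding d_def by simp
  then obtain p where p: "\<alpha> \<le> p" "p \<le> d + pi"
    "bd_param \<alpha> \<beta> x - bd_param \<alpha> \<beta> y = rcis (cmod (bd_param \<alpha> \<beta> x - bd_param \<alpha> \<beta> y)) p"
    using d by (elim sector_polar) auto
  have "bd_param \<alpha> \<beta> z - bd_param \<alpha> \<beta> y \<in> sector d (pi - \<beta>)"
    using bd_chord_forward assms unfolding d_def by simp
  then obtain q where q: "d \<le> q" "q \<le> pi - \<beta>"
    "bd_param \<alpha> \<beta> z - bd_param \<alpha> \<beta> y = rcis (cmod (bd_param \<alpha> \<beta> z - bd_param \<alpha> \<beta> y)) q"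
    using d assms by (elim sector_polar) auto
  have "vertex_prod (bd_param \<alpha> \<beta> x) (bd_param \<alpha> \<beta> y) (bd_param \<alpha> \<beta> z)
      = rcis (cmod (bd_param \<alpha> \<beta> x - bd_param \<alpha> \<beta> y) * cmod (bd_param \<alpha> \<beta> z - bd_param \<alpha> \<beta> y)) (p - q)"
    unfolding vertex_prod_def by (subst p(3), subst q(3)) (rule rcis_mult_cnj_rcis)
  also have "\<dots> \<in> sector (\<alpha> + \<beta> - pi) pi"
    using p q assms by (intro rcis_in_sector) auto
  finally show ?thesis .
qed

section \<open>The supremum\<close>

lemma divide_le_one_divide:
  fixes x y s :: real
  assumes "x * s \<le> y" "0 \<le> y" "0 < s"
  shows "x / y \<le> 1 / s"
  using assms by (cases "y = 0") (simp_all add: divide_simps mult.commute)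

lemma pq_rotate: "pq x1 x2 x3 x4 = pq x2 x3 x4 x1"
  by (cases x1; cases x2; cases x3; cases x4) (auto simp: norm_minus_commute algebra_simps)

lemma pq_bd_pt_le_ordered:
  assumes "0 < \<alpha>" "\<alpha> < pi" "0 < \<beta>" "\<beta> < pi" "pi \<le> \<alpha> + \<beta>"
    and s: "0 < sin ((\<alpha> + \<beta> - pi) / 2)"
    and "olt x1 x2" "olt x2 x3" "olt x3 x4"
  shows "pq (bd_pt \<alpha> \<beta> x1) (bd_pt \<alpha> \<beta> x2) (bd_pt \<alpha> \<beta> x3) (bd_pt \<alpha> \<beta> x4)
    \<le> 1 / sin ((\<alpha> + \<beta> - pi) / 2)"
proof -
  define g where "g = \<alpha> + \<beta> - pi"
  have g: "0 < g" "g \<le> pi"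
    using assms s by (auto simp: g_def less_le)
  let ?\<gamma> = "bd_param \<alpha> \<beta>"
  obtain a b c where abc: "x1 = Some a" "x2 = Some b" "x3 = Some c" "a < b" "b < c"
    using assms(7-9) by (cases x1; cases x2; cases x3) auto
  have angle: "vertex_prod (?\<gamma> u) (?\<gamma> v) (?\<gamma> w) \<in> sector g pi" if "u < v" "v < w" for u v w
    unfolding g_def using assms(1-5) that by (rule bd_vertex_prod_in_sector)
  show ?thesis
  proof (cases x4)
    case None
    have "(cmod (?\<gamma> a - ?\<gamma> b) + cmod (?\<gamma> b - ?\<gamma> c)) * sin (g / 2) \<le> cmod (?\<gamma> a - ?\<gamma> c)"
      using angle[OF abc(4,5)] g by (intro three_point_sin_bound) auto
    with None abc s show ?thesis
      unfolding g_def by (simp add: bd_pt_def divide_le_one_divide)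
  next
    case (Some d)
    with assms(9) abc have "c < d" by simp
    then have "b < d" "a < c"
      using abc by auto
    have "(cmod (?\<gamma> a - ?\<gamma> b) * cmod (?\<gamma> c - ?\<gamma> d) + cmod (?\<gamma> a - ?\<gamma> d) * cmod (?\<gamma> b - ?\<gamma> c))
        * sin (g / 2) \<le> cmod (?\<gamma> a - ?\<gamma> c) * cmod (?\<gamma> b - ?\<gamma> d)"
    proof (rule ptolemy_sin_bound[OF g])
      show "0 \<le> Im (vertex_prod (?\<gamma> d) (?\<gamma> a) (?\<gamma> b))"
        using angle[OF abc(4) \<open>b < d\<close>] by (metis Im_vertex_prod_rotate sector_Im_nonneg)
      show "0 \<le> Im (vertex_prod (?\<gamma> c) (?\<gamma> d) (?\<gamma> a))"
        using angle[OF \<open>a < c\<close> \<open>c < d\<close>] by (metis Im_vertex_prod_rotate sector_Im_nonneg)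
    qed (use angle abc \<open>c < d\<close> in auto)
    with Some abc s show ?thesis
      unfolding g_def by (simp add: bd_pt_def divide_le_one_divide)
  qed
qed

lemma pq_bd_pt_le:
  assumes "0 < \<alpha>" "\<alpha> < pi" "0 < \<beta>" "\<beta> < pi" "pi \<le> \<alpha> + \<beta>"
    and "0 < sin ((\<alpha> + \<beta> - pi) / 2)" "cyc_ord4 x1 x2 x3 x4"
  shows "pq (bd_pt \<alpha> \<beta> x1) (bd_pt \<alpha> \<beta> x2) (bd_pt \<alpha> \<beta> x3) (bd_pt \<alpha> \<beta> x4)
    \<le> 1 / sin ((\<alpha> + \<beta> - pi) / 2)"
proof -
  let ?p = "\<lambda>x1 x2 x3 x4. pq (bd_pt \<alpha> \<beta> x1) (bd_pt \<alpha> \<beta> x2) (bd_pt \<alpha> \<beta> x3) (bd_pt \<alpha> \<beta> x4)"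
  have "?p x1 x2 x3 x4 = ?p x2 x3 x4 x1" "?p x2 x3 x4 x1 = ?p x3 x4 x1 x2" "?p x3 x4 x1 x2 = ?p x4 x1 x2 x3"
    by (rule pq_rotate)+
  with assms(7) pq_bd_pt_le_ordered[OF assms(1-6)] show ?thesis
    unfolding cyc_ord4_def by metis
qed

lemma P_double_le:
  assumes "0 < \<alpha>" "\<alpha> < pi" "0 < \<beta>" "\<beta> < pi" "pi \<le> \<alpha> + \<beta>" "0 < sin ((\<alpha> + \<beta> - pi) / 2)"
  shows "P_double \<alpha> \<beta> \<le> ereal (1 / sin ((\<alpha> + \<beta> - pi) / 2))"
  unfolding P_double_def using pq_bd_pt_le[OF assms] by (auto intro!: Sup_least)

lemma pq_witness:
  assumes "0 < R"
  shows "pq (bd_pt \<alpha> \<beta> (Some (1 + R))) (bd_pt \<alpha> \<beta> None) (bd_pt \<alpha> \<beta> (Some (- R))) (bd_pt \<alpha> \<beta> (Some 0))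
    = (R + cmod (1 + rcis R (pi - \<beta>))) / cmod (1 + rcis R (pi - \<beta>) - rcis R \<alpha>)"
  using assms by (simp add: bd_pt_def bd_param_def rcis_def norm_mult)

lemma pq_witness_lower_bound:
  assumes "0 < \<alpha>" "\<alpha> < pi" "0 < \<beta>" "\<beta> < pi" "pi \<le> \<alpha> + \<beta>" "1 \<le> R"
  shows "(2 * R - 1) / (1 + 2 * R * sin ((\<alpha> + \<beta> - pi) / 2))
    \<le> (R + cmod (1 + rcis R (pi - \<beta>))) / cmod (1 + rcis R (pi - \<beta>) - rcis R \<alpha>)"
proof (rule frac_le)
  have "cos \<alpha> \<le> cos (pi - \<beta>)"
    using assms by (subst cos_mono_le_eq) auto
  then have "R * cos \<alpha> \<le> R * cos (pi - \<beta>)"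
    using assms(6) by (intro mult_left_mono) auto
  then have "1 \<le> Re (1 + rcis R (pi - \<beta>) - rcis R \<alpha>)"
    by simp
  then show "0 < cmod (1 + rcis R (pi - \<beta>) - rcis R \<alpha>)"
    using complex_Re_le_cmod[of "1 + rcis R (pi - \<beta>) - rcis R \<alpha>"] by linarith
  have eq: "1 + rcis R (pi - \<beta>) - rcis R \<alpha> = 1 + of_real R * (cis (pi - \<beta>) - cis \<alpha>)"
    by (simp add: rcis_def algebra_simps)
  have "cmod (1 + rcis R (pi - \<beta>) - rcis R \<alpha>) \<le> 1 + R * cmod (cis (pi - \<beta>) - cis \<alpha>)"
    unfolding eq using norm_triangle_ineq[of 1 "of_real R * (cis (pi - \<beta>) - cis \<alpha>)"] assms(6)
    by (simp add: norm_mult)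
  also have "cmod (cis (pi - \<beta>) - cis \<alpha>) = 2 * sin ((\<alpha> + \<beta> - pi) / 2)"
  proof -
    have "(pi - \<beta> - \<alpha>) / 2 = - ((\<alpha> + \<beta> - pi) / 2)"
      by (simp add: field_simps)
    moreover have "0 \<le> sin ((\<alpha> + \<beta> - pi) / 2)"
      using assms by (intro sin_ge_zero) auto
    ultimately show ?thesis
      by (simp only: norm_cis_diff sin_minus abs_minus_cancel abs_of_nonneg)
  qed
  finally show "cmod (1 + rcis R (pi - \<beta>) - rcis R \<alpha>) \<le> 1 + 2 * R * sin ((\<alpha> + \<beta> - pi) / 2)"
    by simp
  show "2 * R - 1 \<le> R + cmod (1 + rcis R (pi - \<beta>))"
    using norm_diff_ineq[of "rcis R (pi - \<beta>)" 1] assms(6) by (simp add: add.commute)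
qed (use assms(6) in simp)

lemma P_double_ge:
  assumes "0 < \<alpha>" "\<alpha> < pi" "0 < \<beta>" "\<beta> < pi" "pi \<le> \<alpha> + \<beta>" "1 \<le> R"
  shows "ereal ((2 * R - 1) / (1 + 2 * R * sin ((\<alpha> + \<beta> - pi) / 2))) \<le> P_double \<alpha> \<beta>"
proof -
  have "cyc_ord4 (Some (1 + R)) None (Some (- R)) (Some 0)"
    using assms(6) by (simp add: cyc_ord4_def)
  then have "ereal (pq (bd_pt \<alpha> \<beta> (Some (1 + R))) (bd_pt \<alpha> \<beta> None) (bd_pt \<alpha> \<beta> (Some (- R)))
      (bd_pt \<alpha> \<beta> (Some 0))) \<le> P_double \<alpha> \<beta>"
    unfolding P_double_def by (blast intro: Sup_upper)
  moreover have "ereal ((2 * R - 1) / (1 + 2 * R * sin ((\<alpha> + \<beta> - pi) / 2)))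
      \<le> ereal (pq (bd_pt \<alpha> \<beta> (Some (1 + R))) (bd_pt \<alpha> \<beta> None) (bd_pt \<alpha> \<beta> (Some (- R)))
      (bd_pt \<alpha> \<beta> (Some 0)))"
    using pq_witness_lower_bound[OF assms] assms(6) by (simp add: pq_witness)
  ultimately show ?thesis
    by (rule order_trans[rotated])
qed

lemma ratio_tendsto_inverse:
  fixes s :: real
  assumes "0 \<le> s"
  shows "((\<lambda>R. ereal ((2 * R - 1) / (1 + 2 * R * s))) \<longlongrightarrow> (if s = 0 then \<infinity> else ereal (1 / s))) at_top"
proof (cases "s = 0")
  case True
  have "\<forall>\<^sub>F R in at_top. ereal r < ereal (2 * R - 1)" for r
    using eventually_gt_at_top[of "(r + 1) / 2"] by eventually_elim simp
  with True show ?thesis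
    by (simp add: tendsto_PInfty)
next
  case False
  have "((\<lambda>R. (2 - inverse R) / (inverse R + 2 * s)) \<longlongrightarrow> (2 - 0) / (0 + 2 * s)) at_top"
    using False by (intro tendsto_intros tendsto_inverse_0_at_top filterlim_ident) simp
  moreover have "\<forall>\<^sub>F R in at_top. (2 - inverse R) / (inverse R + 2 * s) = (2 * R - 1) / (1 + 2 * R * s)"
    using eventually_gt_at_top[of 0]
  proof eventually_elim
    case (elim R)
    with assms have "0 < 1 + 2 * R * s"
      by (simp add: add_pos_nonneg)
    with elim show ?case
      by (simp add: divide_simps) (simp add: algebra_simps)
  qed
  ultimately have "((\<lambda>R. (2 * R - 1) / (1 + 2 * R * s)) \<longlongrightarrow> 1 / s) at_top"
    by (simp add: tendsto_cong)
  with False show ?thesis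
    by simp
qed

theorem theorem1p4:
  fixes \<alpha> \<beta> :: real
  assumes "0 < \<alpha>" "\<alpha> < pi" "0 < \<beta>" "\<beta> < pi" "\<alpha> + \<beta> \<ge> pi"
  shows "P_double \<alpha> \<beta> =
    (let m = min \<alpha> (min \<beta> (\<alpha> + \<beta> - pi)) in
       if sin (m / 2) = 0 then \<infinity> else ereal (1 / sin (m / 2)))"
proof -
  define s where "s = sin ((\<alpha> + \<beta> - pi) / 2)"
  have m: "min \<alpha> (min \<beta> (\<alpha> + \<beta> - pi)) = \<alpha> + \<beta> - pi"
    using assms by auto
  have "0 \<le> s"
    unfolding s_def using assms by (intro sin_ge_zero) auto
  have "(if s = 0 then \<infinity> else ereal (1 / s)) \<le> P_double \<alpha> \<beta>"
  proof (rule tendsto_le[OF trivial_limit_at_top_linorder tendsto_const ratio_tendsto_inverse[OF \<open>0 \<le> s\<close>]])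
    show "\<forall>\<^sub>F R in at_top. ereal ((2 * R - 1) / (1 + 2 * R * s)) \<le> P_double \<alpha> \<beta>"
      unfolding s_def using eventually_ge_at_top[of 1] by (rule eventually_mono) (rule P_double_ge[OF assms])
  qed
  moreover have "P_double \<alpha> \<beta> \<le> (if s = 0 then \<infinity> else ereal (1 / s))"
    using P_double_le[OF assms] \<open>0 \<le> s\<close> unfolding s_def by auto
  ultimately show ?thesis
    unfolding m Let_def s_def by (rule antisym[rotated])
qed

end
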